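(* Let $X, Y$ be non-empty subsets of $A^+$ such that $(X,Y)$ is a strong alternative code and $Z = XY$ is a regular language. Then $X$ and $Y$ are regular languages.
   Context: $A$ is a finite non-empty alphabet, $A^*$ the set of finite words over $A$, $\varepsilon$ the empty word, $A^+ = A^*\setminus\{\varepsilon\}$. For $X,Y\subseteq A^*$, $XY=\{xy \mid x\in X, y\in Y\}$. For $w\in A^*$ and $Z\subseteq A^*$: $w^{-1}Z=\{u\in A^* \mid wu\in Z\}$ and $Zw^{-1}=\{u\in A^*\mid uw\in Z\}$; for sets, $X^{-1}Z=\bigcup_{x\in X}x^{-1}Z$ and $ZY^{-1}=\bigcup_{y\in Y}Zy^{-1}$. For non-empty $X,Y\subseteq A^+$, an alternative factorization on $(X,Y)$ of a word is a factorization $u_1u_2\cdots u_n$ with $n\ge 2$, all $u_i\in X\cup Y$, such that $u_i\in X$ implies $u_{i+1}\in Y$ and $u_i\in Y$ implies $u_{i+1}\in X$ for $i=1,\dots,n-1$. Two alternative factorizations are similar if their first factors lie in the same set ($X$ or $Y$) and their last factors lie in the same set. $(X,Y)$ is an alternative code if no word of $A^+$ admits two different similar alternative factorizations on $(X,Y)$. An alternative code $(X,Y)$ is a strong alternative code if $X^{-1}(XY)\subseteq Y$ and $(XY)Y^{-1}\subseteq X$. *)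

theory Defs
  imports Main
begin

definition conc :: "'a list set \<Rightarrow> 'a list set \<Rightarrow> 'a list set" where
  "conc X Y = {x @ y | x y. x \<in> X \<and> y \<in> Y}"

definition left_quot :: "'a list set \<Rightarrow> 'a list set \<Rightarrow> 'a list set" where
  "left_quot X Z = {u. \<exists>x\<in>X. x @ u \<in> Z}"

definition right_quot :: "'a list set \<Rightarrow> 'a list set \<Rightarrow> 'a list set" where
  "right_quot Z Y = {u. \<exists>y\<in>Y. u @ y \<in> Z}"

definition regular :: "'a list set \<Rightarrow> bool" where
  "regular L \<longleftrightarrow> (\<exists>(Q::nat set) (\<delta>::nat \<Rightarrow> 'a \<Rightarrow> nat) q0 F.
      finite Q \<and> q0 \<in> Q \<and> F \<subseteq> Q \<and> (\<forall>q\<in>Q. \<forall>a. \<delta> q a \<in> Q) \<and>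
      L = {w. foldl \<delta> q0 w \<in> F})"

definition alt_fact :: "'a list set \<Rightarrow> 'a list set \<Rightarrow> 'a list \<Rightarrow> 'a list list \<Rightarrow> bool" where
  "alt_fact X Y w us \<longleftrightarrow> length us \<ge> 2 \<and> concat us = w \<and> set us \<subseteq> X \<union> Y \<and>
     (\<forall>i. Suc i < length us \<longrightarrow>
        (us ! i \<in> X \<longrightarrow> us ! Suc i \<in> Y) \<and> (us ! i \<in> Y \<longrightarrow> us ! Suc i \<in> X))"

definition similar :: "'a list set \<Rightarrow> 'a list set \<Rightarrow> 'a list list \<Rightarrow> 'a list list \<Rightarrow> bool" where
  "similar X Y us vs \<longleftrightarrow>
     ((hd us \<in> X \<and> hd vs \<in> X) \<or> (hd us \<in> Y \<and> hd vs \<in> Y)) \<and>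
     ((last us \<in> X \<and> last vs \<in> X) \<or> (last us \<in> Y \<and> last vs \<in> Y))"

definition alternative_code :: "'a list set \<Rightarrow> 'a list set \<Rightarrow> bool" where
  "alternative_code X Y \<longleftrightarrow>
     X \<noteq> {} \<and> Y \<noteq> {} \<and> [] \<notin> X \<and> [] \<notin> Y \<and>
     (\<forall>w us vs. w \<noteq> [] \<and> alt_fact X Y w us \<and> alt_fact X Y w vs \<and> similar X Y us vs
        \<longrightarrow> us = vs)"

definition strong_alternative_code :: "'a list set \<Rightarrow> 'a list set \<Rightarrow> bool" where
  "strong_alternative_code X Y \<longleftrightarrow> alternative_code X Y \<and>
     left_quot X (conc X Y) \<subseteq> Y \<and> right_quot (conc X Y) Y \<subseteq> X"

end

theory Submission
  imports Defs
begin

text \<open>A strong alternative code is recovered from \<open>Z = XY\<close> by quotients: \<open>X \<noteq> {}\<close> gives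
  \<open>Y \<subseteq> X\<inverse>Z\<close>, so \<open>Y = X\<inverse>Z\<close>, and symmetrically \<open>X = ZY\<inverse>\<close>. Quotients of a regular language by arbitrary
  languages are regular: for \<open>ZY\<inverse>\<close> keep the automaton of \<open>Z\<close> and accept in the states from
  which some \<open>y \<in> Y\<close> leads to a final state; for \<open>X\<inverse>Z\<close> run the subset automaton from the
  set of states reached on words of \<open>X\<close>.\<close>

lemma foldl_in_closed:
  assumes "\<forall>q\<in>Q. \<forall>a. \<delta> q a \<in> Q" and "q \<in> Q"
  shows "foldl \<delta> q w \<in> Q"
  using assms(2) by (induction w arbitrary: q) (auto simp: assms(1))

lemma regular_by_dfa:
  fixes Q :: "'s set" and \<delta> :: "'s \<Rightarrow> 'a \<Rightarrow> 's"
  assumes fin: "finite Q" and q0: "q0 \<in> Q" and closed: "\<forall>q\<in>Q. \<forall>a. \<delta> q a \<in> Q"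
  shows "regular {w. foldl \<delta> q0 w \<in> F}"
proof -
  obtain f :: "'s \<Rightarrow> nat" where inj: "inj_on f Q"
    using finite_imp_inj_to_nat_seg[OF fin] by blast
  define \<delta>' where "\<delta>' n a = f (\<delta> (inv_into Q f n) a)" for n a
  have run: "foldl \<delta>' (f q) w = f (foldl \<delta> q w)" if "q \<in> Q" for q w
    using that
  proof (induction w arbitrary: q)
    case Nil
    then show ?case by simp
  next
    case (Cons a w)
    have "\<delta>' (f q) a = f (\<delta> q a)" using Cons.prems inj by (simp add: \<delta>'_def)
    then show ?case using Cons closed by simp
  qed
  have accept: "foldl \<delta> q0 w \<in> F \<longleftrightarrow> foldl \<delta>' (f q0) w \<in> f ` (F \<inter> Q)" for w
    using foldl_in_closed[OF closed q0, of w] inj run[OF q0, of w]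
    by (auto simp: inj_on_def)
  show ?thesis
    unfolding regular_def
  proof (intro exI conjI)
    show "finite (f ` Q)" "f q0 \<in> f ` Q" "f ` (F \<inter> Q) \<subseteq> f ` Q"
      using fin q0 by auto
    show "\<forall>q\<in>f ` Q. \<forall>a. \<delta>' q a \<in> f ` Q"
      using closed inj by (auto simp: \<delta>'_def)
    show "{w. foldl \<delta> q0 w \<in> F} = {w. foldl \<delta>' (f q0) w \<in> f ` (F \<inter> Q)}"
      using accept by blast
  qed
qed

lemma regular_right_quot:
  assumes "regular Z"
  shows "regular (right_quot Z Y)"
proof -
  obtain Q :: "nat set" and \<delta> q0 F where dfa: "finite Q" "q0 \<in> Q"
    "\<forall>q\<in>Q. \<forall>a. \<delta> q a \<in> Q" and Z: "Z = {w. foldl \<delta> q0 w \<in> F}"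
    using assms unfolding regular_def by blast
  have "right_quot Z Y = {w. foldl \<delta> q0 w \<in> {q. \<exists>y\<in>Y. foldl \<delta> q y \<in> F}}"
    unfolding right_quot_def Z by simp
  then show ?thesis
    using regular_by_dfa[OF dfa, of "{q. \<exists>y\<in>Y. foldl \<delta> q y \<in> F}"] by simp
qed

lemma regular_left_quot:
  assumes "regular Z"
  shows "regular (left_quot X Z)"
proof -
  obtain Q :: "nat set" and \<delta> q0 F where dfa: "finite Q" "q0 \<in> Q"
    "\<forall>q\<in>Q. \<forall>a. \<delta> q a \<in> Q" and Z: "Z = {w. foldl \<delta> q0 w \<in> F}"
    using assms unfolding regular_def by blast
  define \<Delta> where "\<Delta> S a = (\<lambda>q. \<delta> q a) ` S" for S a
  define S0 where "S0 = (\<lambda>x. foldl \<delta> q0 x) ` X"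
  have run: "foldl \<Delta> S w = (\<lambda>q. foldl \<delta> q w) ` S" for S w
    by (induction w arbitrary: S) (auto simp: \<Delta>_def image_image)
  have "left_quot X Z = {w. foldl \<Delta> S0 w \<in> {S. S \<inter> F \<noteq> {}}}"
    unfolding left_quot_def Z run S0_def by (auto simp: image_image)
  moreover have "regular {w. foldl \<Delta> S0 w \<in> {S. S \<inter> F \<noteq> {}}}"
  proof (rule regular_by_dfa)
    show "finite (Pow Q)" using dfa(1) by simp
    show "S0 \<in> Pow Q" using foldl_in_closed[OF dfa(3,2)] by (auto simp: S0_def)
    show "\<forall>S\<in>Pow Q. \<forall>a. \<Delta> S a \<in> Pow Q" using dfa(3) by (auto simp: \<Delta>_def)
  qed
  ultimately show ?thesis by simp
qed

lemma strong_alternative_code_left_quot_eq: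
  assumes "strong_alternative_code X Y"
  shows "left_quot X (conc X Y) = Y"
proof
  show "left_quot X (conc X Y) \<subseteq> Y"
    using assms unfolding strong_alternative_code_def by blast
  have "X \<noteq> {}"
    using assms unfolding strong_alternative_code_def alternative_code_def by blast
  then show "Y \<subseteq> left_quot X (conc X Y)"
    unfolding left_quot_def conc_def by blast
qed

lemma strong_alternative_code_right_quot_eq:
  assumes "strong_alternative_code X Y"
  shows "right_quot (conc X Y) Y = X"
proof
  show "right_quot (conc X Y) Y \<subseteq> X"
    using assms unfolding strong_alternative_code_def by blast
  have "Y \<noteq> {}"
    using assms unfolding strong_alternative_code_def alternative_code_def by blast
  then show "X \<subseteq> right_quot (conc X Y) Y"
    unfolding right_quot_def conc_def by blast
qed

theorem mainTheorem2:
  fixes X Y :: "('a::finite) list set"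
  assumes "X \<noteq> {}" and "Y \<noteq> {}" and "[] \<notin> X" and "[] \<notin> Y"
    and "strong_alternative_code X Y"
    and "regular (conc X Y)"
  shows "regular X \<and> regular Y"
proof
  show "regular X"
    using regular_right_quot[OF assms(6), of Y]
    by (simp add: strong_alternative_code_right_quot_eq[OF assms(5)])
  show "regular Y"
    using regular_left_quot[OF assms(6), of X]
    by (simp add: strong_alternative_code_left_quot_eq[OF assms(5)])
qed

end
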